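(* Fix $t>0$ and $\beta>0$. Let $(\beta_n)_{n\ge1}$ be a sequence of subprobability measures on $\mathbb{R}^d$ that totally disintegrates, i.e. for every $r>0$, $\sup_{x\in\mathbb{R}^d}\beta_n(B_r(x))\to0$ as $n\to\infty$. Then $$\lim_{n\to\infty}\mathbf E\Big[\big(\mathscr F_t(\beta_n)-\mathbf E[\mathscr F_t(\beta_n)]\big)^2\Big]=0.$$
   Context: $d\ge1$; $\mathbb{P}_z$, $\mathbb{E}_z$ law/expectation of Brownian motion $W$ in $\mathbb{R}^d$ started at $z$; $\dot B$ a Gaussian space-time white noise independent of $W$ on $(\mathcal E,\mathcal F,\mathbf P)$ with expectation $\mathbf E$; $\phi\ge0$ smooth, spherically symmetric, supported in $B_{1/2}(0)$, $\int\phi=1$; $\mathscr H_t(W)=\int_0^t\int_{\mathbb{R}^d}\phi(W_s-y)\dot B(s,y)\,\mathrm{d}y\,\mathrm{d}s$. For a subprobability measure $\alpha$ on $\mathbb{R}^d$, $\mathscr F_t(\alpha)=\int_{\mathbb{R}^d}\alpha(\mathrm{d}z)\,\mathbb{E}_z\big[e^{\beta\mathscr H_t(W)}\big]$. *)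

theory Defs
  imports "HOL-Probability.Probability"
begin

text \<open>C-infinity smoothness on a Euclidean space: there is a family F of iterated partial
derivatives (indexed by finite lists of basis directions) with F [] = f, each F l
being (Frechet) differentiable everywhere with partial derivatives F (b # l).\<close>
definition smooth_fun :: "('a::euclidean_space \<Rightarrow> real) \<Rightarrow> bool" where
  "smooth_fun f \<longleftrightarrow> (\<exists>F :: 'a list \<Rightarrow> 'a \<Rightarrow> real. F [] = f \<and>
      (\<forall>l x. (F l has_derivative (\<lambda>h. \<Sum>b\<in>Basis. (h \<bullet> b) * F (b # l) x)) (at x)))"

definition mollifier :: "('a::euclidean_space \<Rightarrow> real) \<Rightarrow> bool" where
  "mollifier \<phi> \<longleftrightarrow> smooth_fun \<phi> \<and> (\<forall>x. 0 \<le> \<phi> x) \<and>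
     (\<forall>x y. norm x = norm y \<longrightarrow> \<phi> x = \<phi> y) \<and>
     closure {x. \<phi> x \<noteq> 0} \<subseteq> ball 0 (1/2) \<and>
     integrable lborel \<phi> \<and> integral\<^sup>L lborel \<phi> = 1"

definition brownian_motion :: "'w measure \<Rightarrow> ('w \<Rightarrow> real \<Rightarrow> 'd::euclidean_space) \<Rightarrow> bool" where
  "brownian_motion M W \<longleftrightarrow> prob_space M \<and>
     (\<forall>s. (\<lambda>w. W w s) \<in> borel_measurable M) \<and>
     (\<forall>w. W w 0 = 0 \<and> continuous_on {0..} (W w)) \<and>
     (\<forall>(ts :: nat \<Rightarrow> real) n. 0 \<le> ts 0 \<and> strict_mono ts \<longrightarrow>
        prob_space.indep_vars M (\<lambda>_. borel)
          (\<lambda>(i, b) w. (W w (ts (Suc i)) - W w (ts i)) \<bullet> b) ({..<n} \<times> Basis) \<and>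
        (\<forall>i b. b \<in> Basis \<longrightarrow> distributed M lborel (\<lambda>w. (W w (ts (Suc i)) - W w (ts i)) \<bullet> b)
                 (normal_density 0 (sqrt (ts (Suc i) - ts i)))))"

text \<open>Gaussian space-time white noise on R x R^d, realised as an isonormal Gaussian process
indexed by square-integrable functions: B f is centred Gaussian with variance the squared
L2 norm of f (degenerate at 0 if the norm vanishes), and B is a.s. linear.\<close>
definition square_int :: "(real \<times> 'd::euclidean_space \<Rightarrow> real) \<Rightarrow> bool" where
  "square_int f \<longleftrightarrow> f \<in> borel_measurable lborel \<and> integrable lborel (\<lambda>x. (f x)\<^sup>2)"

definition white_noise :: "'e measure \<Rightarrow> ((real \<times> 'd::euclidean_space \<Rightarrow> real) \<Rightarrow> 'e \<Rightarrow> real) \<Rightarrow> bool" where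
  "white_noise P B \<longleftrightarrow> prob_space P \<and>
     (\<forall>f. square_int f \<longrightarrow> B f \<in> borel_measurable P \<and>
        (if (\<integral>x. (f x)\<^sup>2 \<partial>lborel) = 0 then (AE \<omega> in P. B f \<omega> = 0)
         else distributed P lborel (B f) (normal_density 0 (sqrt (\<integral>x. (f x)\<^sup>2 \<partial>lborel))))) \<and>
     (\<forall>f g. square_int f \<longrightarrow> square_int g \<longrightarrow>
        (AE \<omega> in P. B (\<lambda>x. f x + g x) \<omega> = B f \<omega> + B g \<omega>)) \<and>
     (\<forall>f c. square_int f \<longrightarrow> (AE \<omega> in P. B (\<lambda>x. c * f x) \<omega> = c * B f \<omega>))"

definition H_integrand :: "('a::euclidean_space \<Rightarrow> real) \<Rightarrow> real \<Rightarrow> (real \<Rightarrow> 'a) \<Rightarrow> real \<times> 'a \<Rightarrow> real" where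
  "H_integrand \<phi> t p = (\<lambda>(s, y). indicator {0..t} s * \<phi> (p s - y))"

text \<open>A jointly measurable version H of (omega, z, w) \<mapsto> H_t(z + W(w))(omega):
for every starting point z and every Brownian sample w, H(., z, w) coincides a.s. with
the white-noise integral of the integrand along the path z + W(w).\<close>
definition H_version :: "'e measure \<Rightarrow> ((real \<times> 'd \<Rightarrow> real) \<Rightarrow> 'e \<Rightarrow> real) \<Rightarrow> 'w measure \<Rightarrow>
     ('w \<Rightarrow> real \<Rightarrow> 'd::euclidean_space) \<Rightarrow> ('d \<Rightarrow> real) \<Rightarrow> real \<Rightarrow> ('e \<Rightarrow> 'd \<Rightarrow> 'w \<Rightarrow> real) \<Rightarrow> bool" where
  "H_version P B M W \<phi> t H \<longleftrightarrow>
     (\<lambda>(\<omega>, z, w). H \<omega> z w) \<in> borel_measurable (P \<Otimes>\<^sub>M (borel \<Otimes>\<^sub>M M)) \<and>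
     (\<forall>z w. AE \<omega> in P. H \<omega> z w = B (H_integrand \<phi> t (\<lambda>s. z + W w s)) \<omega>)"

definition F_t :: "'w measure \<Rightarrow> ('e \<Rightarrow> 'd \<Rightarrow> 'w \<Rightarrow> real) \<Rightarrow> real \<Rightarrow> 'd measure \<Rightarrow> 'e \<Rightarrow> real" where
  "F_t M H \<beta> \<alpha> \<omega> = (\<integral>z. (\<integral>w. exp (\<beta> * H \<omega> z w) \<partial>M) \<partial>\<alpha>)"

definition subprob_on :: "'d::euclidean_space measure \<Rightarrow> bool" where
  "subprob_on \<alpha> \<longleftrightarrow> sets \<alpha> = sets borel \<and> subprob_space \<alpha>"

definition totally_disintegrates :: "(nat \<Rightarrow> 'd::euclidean_space measure) \<Rightarrow> bool" where
  "totally_disintegrates \<alpha> \<longleftrightarrow>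
     (\<forall>r>0. (\<lambda>n. SUP x. measure (\<alpha> n) (ball x r)) \<longlonglongrightarrow> 0)"

end

theory Submission
  imports Defs
begin

text \<open>
  Write \<open>S = \<alpha> \<otimes> P\<^sub>W\<close> for the measure on pairs \<open>u = (z, w)\<close> of a starting point and a path,
  and \<open>H\<^sub>u\<close> for the noise integral along the trajectory \<open>s \<mapsto> z + W\<^sub>s(w)\<close>; it is a centred
  Gaussian with variance \<open>K = t \<parallel>\<phi>\<parallel>\<^sup>2\<close>. By Tonelli and the Gaussian moment generating function,
  \<open>E F = e\<^bsup>\<beta>\<^sup>2K/2\<^esup> |S|\<close> and \<open>E F\<^sup>2 = \<integral>\<integral> exp (\<beta>\<^sup>2 \<parallel>f\<^sub>u + f\<^sub>u\<^sub>'\<parallel>\<^sup>2 / 2) dS dS\<close>, where \<open>f\<^sub>u\<close> is the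
  integrand of \<open>H\<^sub>u\<close>. If the starting points are at distance at least \<open>1 + 2R\<close> and both paths
  stay in the \<open>R\<close>-ball up to time \<open>t\<close>, then \<open>f\<^sub>u\<close> and \<open>f\<^sub>u\<^sub>'\<close> have disjoint supports and the pair
  contributes exactly \<open>e\<^bsup>\<beta>\<^sup>2K\<^esup>\<close>, as in \<open>(E F)\<^sup>2\<close>; every other pair contributes at most
  \<open>e\<^bsup>2\<beta>\<^sup>2K\<^esup>\<close>. Hence \<open>Var F \<le> e\<^bsup>2\<beta>\<^sup>2K\<^esup> (sup\<^sub>x \<alpha>(B(x, 1 + 2R)) + 2 P(sup\<^sub>s\<^sub>\<le>\<^sub>t |W\<^sub>s| > R))\<close>.
  The first term vanishes as \<open>n \<rightarrow> \<infinity>\<close> for fixed \<open>R\<close> by total disintegration, the second as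
  \<open>R \<rightarrow> \<infinity>\<close> by continuity of the paths; nothing else about the Brownian motion is used.
\<close>

lemma normal_density_mult_exp:
  assumes "\<sigma> > 0"
  shows "normal_density 0 \<sigma> x * exp (c * x) = exp (c\<^sup>2 * \<sigma>\<^sup>2 / 2) * normal_density (c * \<sigma>\<^sup>2) \<sigma> x"
proof -
  have "-(x - 0)\<^sup>2 / (2 * \<sigma>\<^sup>2) + c * x = c\<^sup>2 * \<sigma>\<^sup>2 / 2 + (-(x - c * \<sigma>\<^sup>2)\<^sup>2 / (2 * \<sigma>\<^sup>2))"
    using assms by (simp add: field_simps power2_eq_square)
  then show ?thesis
    unfolding normal_density_def by (simp add: exp_add[symmetric] field_simps)
qed

lemma nn_integral_exp_normal:
  assumes "\<sigma> > 0" and X: "distributed P lborel X (normal_density 0 \<sigma>)"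
  shows "(\<integral>\<^sup>+\<omega>. exp (c * X \<omega>) \<partial>P) = exp (c\<^sup>2 * \<sigma>\<^sup>2 / 2)"
proof -
  have "(\<integral>\<^sup>+\<omega>. exp (c * X \<omega>) \<partial>P) = (\<integral>\<^sup>+x. normal_density 0 \<sigma> x * exp (c * x) \<partial>lborel)"
    by (subst distributed_nn_integral[OF X, symmetric]) (simp_all add: ennreal_mult')
  also have "\<dots> = (\<integral>\<^sup>+x. exp (c\<^sup>2 * \<sigma>\<^sup>2 / 2) * normal_density (c * \<sigma>\<^sup>2) \<sigma> x \<partial>lborel)"
    by (simp add: normal_density_mult_exp[OF assms(1)])
  also have "\<dots> = exp (c\<^sup>2 * \<sigma>\<^sup>2 / 2) * (\<integral>\<^sup>+x. normal_density (c * \<sigma>\<^sup>2) \<sigma> x \<partial>lborel)"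
    by (simp add: ennreal_mult' nn_integral_cmult)
  also have "(\<integral>\<^sup>+x. normal_density (c * \<sigma>\<^sup>2) \<sigma> x \<partial>lborel) = 1"
    using assms(1) by (subst nn_integral_eq_integral) (auto simp: integral_normal_density)
  finally show ?thesis by simp
qed

lemma white_noise_prob_space: "white_noise P B \<Longrightarrow> prob_space P"
  unfolding white_noise_def by simp

lemma white_noise_nn_integral_exp:
  assumes B: "white_noise P B" and f: "square_int f"
  shows "(\<integral>\<^sup>+\<omega>. exp (c * B f \<omega>) \<partial>P) = exp (c\<^sup>2 * (\<integral>x. (f x)\<^sup>2 \<partial>lborel) / 2)"
proof (cases "(\<integral>x. (f x)\<^sup>2 \<partial>lborel) = 0")
  case True
  interpret prob_space P using B by (rule white_noise_prob_space)
  have "AE \<omega> in P. B f \<omega> = 0" using B f True unfolding white_noise_def by auto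
  then have "(\<integral>\<^sup>+\<omega>. exp (c * B f \<omega>) \<partial>P) = (\<integral>\<^sup>+\<omega>. 1 \<partial>P)"
    by (intro nn_integral_cong_AE) auto
  then show ?thesis using True by (simp add: emeasure_space_1)
next
  case False
  define v where "v = (\<integral>x. (f x)\<^sup>2 \<partial>lborel)"
  have "v > 0" using False by (simp add: v_def order_neq_le_trans)
  have "distributed P lborel (B f) (normal_density 0 (sqrt v))"
    using B f False unfolding white_noise_def v_def by auto
  from nn_integral_exp_normal[OF _ this, of c] show ?thesis
    using \<open>v > 0\<close> by (simp add: v_def)
qed

lemma square_add_le: "(a + b)\<^sup>2 \<le> 2 * a\<^sup>2 + 2 * (b::real)\<^sup>2"
  using sum_squares_ge_zero[of "a - b" 0] by (simp add: power2_eq_square algebra_simps)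

lemma square_int_add:
  assumes f: "square_int f" and g: "square_int g"
  shows "square_int (\<lambda>x. f x + g x)"
proof -
  have [measurable]: "f \<in> borel_measurable lborel" "g \<in> borel_measurable lborel"
    using f g unfolding square_int_def by simp_all
  have bound: "integrable lborel (\<lambda>x. 2 * (f x)\<^sup>2 + 2 * (g x)\<^sup>2)"
    using f g unfolding square_int_def by simp
  have "integrable lborel (\<lambda>x. (f x + g x)\<^sup>2)"
    using square_add_le by (intro Bochner_Integration.integrable_bound[OF bound]) auto
  then show ?thesis unfolding square_int_def by simp
qed

lemma white_noise_nn_integral_exp_mult:
  assumes B: "white_noise P B" and f: "square_int f" and g: "square_int g"
  shows "(\<integral>\<^sup>+\<omega>. exp (c * B f \<omega>) * exp (c * B g \<omega>) \<partial>P)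
    = exp (c\<^sup>2 * (\<integral>x. (f x + g x)\<^sup>2 \<partial>lborel) / 2)"
proof -
  have "AE \<omega> in P. B (\<lambda>x. f x + g x) \<omega> = B f \<omega> + B g \<omega>"
    using B f g unfolding white_noise_def by blast
  then have "(\<integral>\<^sup>+\<omega>. exp (c * B f \<omega>) * exp (c * B g \<omega>) \<partial>P)
      = (\<integral>\<^sup>+\<omega>. exp (c * B (\<lambda>x. f x + g x) \<omega>) \<partial>P)"
    by (intro nn_integral_cong_AE) (auto simp: exp_add[symmetric] algebra_simps)
  then show ?thesis
    using white_noise_nn_integral_exp[OF B square_int_add[OF f g]] by simp
qed

lemma integral_square_add_le:
  assumes "square_int f" and "square_int g"
  shows "(\<integral>x. (f x + g x)\<^sup>2 \<partial>lborel) \<le> 2 * (\<integral>x. (f x)\<^sup>2 \<partial>lborel) + 2 * (\<integral>x. (g x)\<^sup>2 \<partial>lborel)"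
proof -
  have "(\<integral>x. (f x + g x)\<^sup>2 \<partial>lborel) \<le> (\<integral>x. 2 * (f x)\<^sup>2 + 2 * (g x)\<^sup>2 \<partial>lborel)"
    using assms square_int_add[OF assms] square_add_le unfolding square_int_def
    by (intro integral_mono) auto
  then show ?thesis using assms unfolding square_int_def by simp
qed

lemma integral_square_add_eq:
  assumes "square_int f" and "square_int g" and "\<And>x. f x * g x = 0"
  shows "(\<integral>x. (f x + g x)\<^sup>2 \<partial>lborel) = (\<integral>x. (f x)\<^sup>2 \<partial>lborel) + (\<integral>x. (g x)\<^sup>2 \<partial>lborel)"
proof -
  have "(\<integral>x. (f x + g x)\<^sup>2 \<partial>lborel) = (\<integral>x. (f x)\<^sup>2 + (g x)\<^sup>2 \<partial>lborel)"
    using assms(3) by (intro Bochner_Integration.integral_cong) (auto simp: power2_eq_square algebra_simps)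
  then show ?thesis using assms unfolding square_int_def by simp
qed

lemma smooth_fun_continuous:
  assumes "smooth_fun f"
  shows "continuous_on UNIV f"
proof -
  obtain F where F: "F [] = f" "\<And>l x. (F l has_derivative (\<lambda>h. \<Sum>b\<in>Basis. (h \<bullet> b) * F (b # l) x)) (at x)"
    using assms unfolding smooth_fun_def by blast
  have "isCont f x" for x
    using has_derivative_continuous[OF F(2)[of "[]" x]] by (simp only: F(1))
  then show ?thesis by (simp add: continuous_at_imp_continuous_on)
qed

lemma mollifier_support:
  assumes "mollifier \<phi>" and "\<phi> x \<noteq> 0"
  shows "norm x < 1/2"
proof -
  have "closure {x. \<phi> x \<noteq> 0} \<subseteq> ball 0 (1/2)"
    using assms(1) unfolding mollifier_def by (elim conjE)
  moreover have "x \<in> closure {x. \<phi> x \<noteq> 0}" using assms(2) closure_subset[of "{x. \<phi> x \<noteq> 0}"] by blast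
  ultimately have "x \<in> ball 0 (1/2)" by (rule subsetD)
  then show ?thesis by simp
qed

lemma mollifier_even:
  assumes "mollifier \<phi>"
  shows "\<phi> (- x) = \<phi> x"
proof -
  have "\<forall>x y. norm x = norm y \<longrightarrow> \<phi> x = \<phi> y"
    using assms unfolding mollifier_def by (elim conjE)
  then show ?thesis by (metis norm_minus_cancel)
qed

lemma mollifier_continuous:
  assumes "mollifier \<phi>"
  shows "continuous_on UNIV \<phi>"
proof -
  have "smooth_fun \<phi>" using assms unfolding mollifier_def by (elim conjE)
  then show ?thesis by (rule smooth_fun_continuous)
qed

lemma integrable_mollifier_square:
  assumes "mollifier \<phi>"
  shows "integrable lborel (\<lambda>x. (\<phi> x)\<^sup>2)"
proof -
  have supp: "(\<lambda>x. indicator (cball 0 (1/2)) x *\<^sub>R (\<phi> x)\<^sup>2) = (\<lambda>x. (\<phi> x)\<^sup>2)"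
  proof
    fix x show "indicator (cball 0 (1/2)) x *\<^sub>R (\<phi> x)\<^sup>2 = (\<phi> x)\<^sup>2"
      using mollifier_support[OF assms, of x] by (cases "\<phi> x = 0") (auto simp: indicator_def)
  qed
  have "continuous_on (cball 0 (1/2)) (\<lambda>x. (\<phi> x)\<^sup>2)"
    using mollifier_continuous[OF assms] by (auto intro: continuous_on_subset continuous_intros)
  then have "integrable lborel (\<lambda>x. indicator (cball 0 (1/2)) x *\<^sub>R (\<phi> x)\<^sup>2)"
    by (intro borel_integrable_compact) auto
  then show ?thesis by (simp only: supp)
qed

lemma nn_integral_mollifier_square_shift:
  assumes "mollifier \<phi>"
  shows "(\<integral>\<^sup>+y. (\<phi> (a - y))\<^sup>2 \<partial>lborel) = (\<integral>y. (\<phi> y)\<^sup>2 \<partial>lborel)"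
proof -
  have [measurable]: "\<phi> \<in> borel_measurable borel"
    using mollifier_continuous[OF assms] by (rule borel_measurable_continuous_onI)
  have "(\<integral>\<^sup>+y. (\<phi> (a - y))\<^sup>2 \<partial>lborel) = (\<integral>\<^sup>+y. (\<phi> (-a + y))\<^sup>2 \<partial>lborel)"
    using mollifier_even[OF assms, of "y - a" for y] by (simp add: algebra_simps)
  also have "\<dots> = (\<integral>\<^sup>+y. (\<phi> y)\<^sup>2 \<partial>distr lborel borel ((+) (-a)))"
    by (subst nn_integral_distr) auto
  also have "\<dots> = (\<integral>y. (\<phi> y)\<^sup>2 \<partial>lborel)"
    using integrable_mollifier_square[OF assms] by (simp add: lborel_distr_plus nn_integral_eq_integral)
  finally show ?thesis .
qed

lemma borel_measurable_H_integrand: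
  assumes "mollifier \<phi>" and "continuous_on {0..} p"
  shows "H_integrand \<phi> t p \<in> borel_measurable borel"
proof -
  have "continuous_on ({0..t} \<times> UNIV) (\<lambda>x. \<phi> (p (fst x) - snd x))"
    using assms by (intro continuous_on_compose2[OF mollifier_continuous[OF assms(1)]] continuous_intros
        continuous_on_compose2[OF assms(2)]) auto
  then have "(\<lambda>x. indicator ({0..t} \<times> UNIV) x *\<^sub>R \<phi> (p (fst x) - snd x)) \<in> borel_measurable borel"
    by (intro borel_measurable_continuous_on_indicator) (auto intro: borel_closed closed_Times)
  moreover have "H_integrand \<phi> t p = (\<lambda>x. indicator ({0..t} \<times> UNIV) x *\<^sub>R \<phi> (p (fst x) - snd x))"
    unfolding H_integrand_def by (auto simp: fun_eq_iff indicator_def)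
  ultimately show ?thesis by simp
qed

lemma nn_integral_H_integrand_square:
  assumes "mollifier \<phi>" and "continuous_on {0..} p" and "0 \<le> t"
  shows "(\<integral>\<^sup>+x. (H_integrand \<phi> t p x)\<^sup>2 \<partial>lborel) = t * (\<integral>y. (\<phi> y)\<^sup>2 \<partial>lborel)"
proof -
  define Q where "Q = (\<integral>y. (\<phi> y)\<^sup>2 \<partial>lborel)"
  have [measurable]: "H_integrand \<phi> t p \<in> borel_measurable (lborel \<Otimes>\<^sub>M lborel)"
    using borel_measurable_H_integrand[OF assms(1,2)] by (simp add: lborel_prod)
  have slice: "(\<integral>\<^sup>+y. (H_integrand \<phi> t p (s, y))\<^sup>2 \<partial>lborel) = ennreal Q * indicator {0..t} s" for s
    using nn_integral_mollifier_square_shift[OF assms(1), of "p s"]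
    by (cases "s \<in> {0..t}") (simp_all add: H_integrand_def Q_def)
  have "(\<integral>\<^sup>+x. (H_integrand \<phi> t p x)\<^sup>2 \<partial>lborel)
      = (\<integral>\<^sup>+x. (H_integrand \<phi> t p x)\<^sup>2 \<partial>(lborel \<Otimes>\<^sub>M lborel))"
    by (simp only: lborel_prod)
  also have "\<dots> = (\<integral>\<^sup>+s. \<integral>\<^sup>+y. (H_integrand \<phi> t p (s, y))\<^sup>2 \<partial>lborel \<partial>lborel)"
    by (rule lborel.nn_integral_fst[symmetric]) measurable
  also have "\<dots> = ennreal Q * emeasure lborel {0..t}"
    by (simp add: slice nn_integral_cmult_indicator)
  also have "\<dots> = t * Q"
    using assms(3) by (simp add: Q_def ennreal_mult' mult.commute)
  finally show ?thesis unfolding Q_def .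
qed

lemma square_int_H_integrand:
  assumes "mollifier \<phi>" and "continuous_on {0..} p" and "0 \<le> t"
  shows "square_int (H_integrand \<phi> t p)"
proof -
  have [measurable]: "H_integrand \<phi> t p \<in> borel_measurable lborel"
    using borel_measurable_H_integrand[OF assms(1,2)] by simp
  show ?thesis
    unfolding square_int_def using nn_integral_H_integrand_square[OF assms]
    by (auto intro!: integrableI_nonneg)
qed

lemma integral_H_integrand_square:
  assumes "mollifier \<phi>" and "continuous_on {0..} p" and "0 \<le> t"
  shows "(\<integral>x. (H_integrand \<phi> t p x)\<^sup>2 \<partial>lborel) = t * (\<integral>y. (\<phi> y)\<^sup>2 \<partial>lborel)"
proof -
  have [measurable]: "H_integrand \<phi> t p \<in> borel_measurable lborel"
    using borel_measurable_H_integrand[OF assms(1,2)] by simp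
  show ?thesis
    using assms(3) by (simp add: integral_eq_nn_integral nn_integral_H_integrand_square[OF assms])
qed

lemma H_integrand_mult_eq_0:
  assumes "mollifier \<phi>" and far: "\<And>s. s \<in> {0..t} \<Longrightarrow> 1 \<le> dist (p s) (p' s)"
  shows "H_integrand \<phi> t p x * H_integrand \<phi> t p' x = 0"
proof (rule ccontr)
  obtain s y where x: "x = (s, y)" by (cases x)
  assume "H_integrand \<phi> t p x * H_integrand \<phi> t p' x \<noteq> 0"
  then have s: "s \<in> {0..t}" and "\<phi> (p s - y) \<noteq> 0" and "\<phi> (p' s - y) \<noteq> 0"
    by (auto simp: x H_integrand_def indicator_def split: if_splits)
  then have "norm (p s - y) < 1/2" and "norm (p' s - y) < 1/2"
    using mollifier_support[OF assms(1)] by blast+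
  then have "dist (p s) (p' s) < 1"
    using dist_triangle_half_l[of "p s" y 1 "p' s"] by (simp add: dist_norm)
  then show False using far[OF s] by simp
qed

lemma le_on_Icc_if_le_on_Rats:
  fixes g :: "real \<Rightarrow> real"
  assumes g: "continuous_on {a..b} g" and "a \<in> \<rat>"
    and le: "\<And>q. q \<in> \<rat> \<Longrightarrow> q \<in> {a..b} \<Longrightarrow> g q \<le> c" and s: "s \<in> {a..b}"
  shows "g s \<le> c"
proof (cases "s = a")
  case True
  then show ?thesis using assms by blast
next
  case False
  then have "a < b" using s by auto
  have "closed {x \<in> {a..b}. g x \<le> c}"
    using continuous_on_closed_Collect_le[OF g continuous_on_const] by simp
  moreover have "{a<..<b} \<inter> \<rat> \<subseteq> {x \<in> {a..b}. g x \<le> c}"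
    using le by auto
  ultimately have "closure ({a<..<b} \<inter> \<rat>) \<subseteq> {x \<in> {a..b}. g x \<le> c}"
    by (rule closure_minimal[rotated])
  moreover have "{a<..<b} \<subseteq> closure ({a<..<b} \<inter> \<rat>)"
    using open_Int_closure_subset[of "{a<..<b}" \<rat>] by (simp add: Rats_closure_real)
  then have "{a..b} \<subseteq> closure ({a<..<b} \<inter> \<rat>)"
    using closure_mono[of "{a<..<b}" "closure ({a<..<b} \<inter> \<rat>)"] \<open>a < b\<close> by simp
  ultimately show ?thesis using s by blast
qed

definition paths_bounded :: "'w measure \<Rightarrow> ('w \<Rightarrow> real \<Rightarrow> 'a::real_normed_vector) \<Rightarrow> real \<Rightarrow> real \<Rightarrow> 'w set"
  where "paths_bounded M W t R = {w \<in> space M. \<forall>s\<in>{0..t}. norm (W w s) \<le> R}"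

lemma sets_paths_bounded:
  assumes [measurable]: "\<And>s. (\<lambda>w. W w s) \<in> borel_measurable M"
    and cont: "\<And>w. continuous_on {0..} (W w)"
  shows "paths_bounded M W t R \<in> sets M"
proof -
  have "paths_bounded M W t R
      = {w \<in> space M. \<forall>q::rat. real_of_rat q \<in> {0..t} \<longrightarrow> norm (W w (real_of_rat q)) \<le> R}"
  proof -
    have "norm (W w s) \<le> R"
      if "\<forall>q::rat. real_of_rat q \<in> {0..t} \<longrightarrow> norm (W w (real_of_rat q)) \<le> R" and "s \<in> {0..t}"
      for w s
    proof (rule le_on_Icc_if_le_on_Rats[where g = "\<lambda>s. norm (W w s)"])
      have "continuous_on {0..t} (W w)"
        using cont[of w] by (rule continuous_on_subset) auto
      then show "continuous_on {0..t} (\<lambda>s. norm (W w s))"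
        by (rule continuous_on_norm)
    qed (use that in \<open>auto elim: Rats_cases\<close>)
    then show ?thesis unfolding paths_bounded_def by auto
  qed
  also have "\<dots> \<in> sets M" by measurable
  finally show ?thesis .
qed

lemma measure_paths_unbounded_tendsto_0:
  assumes "prob_space M" and "\<And>s. (\<lambda>w. W w s) \<in> borel_measurable M"
    and cont: "\<And>w. continuous_on {0..} (W w)"
  shows "(\<lambda>R. measure M (space M - paths_bounded M W t (real R))) \<longlonglongrightarrow> 0"
proof -
  interpret prob_space M by fact
  have "(\<Inter>R. space M - paths_bounded M W t (real R)) = {}"
  proof (intro equals0I)
    fix w assume w: "w \<in> (\<Inter>R. space M - paths_bounded M W t (real R))"
    have "continuous_on {0..t} (W w)"
      using cont[of w] by (rule continuous_on_subset) auto
    then have "compact (W w ` {0..t})"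
      by (rule compact_continuous_image[OF _ compact_Icc])
    then obtain C where "\<forall>s\<in>{0..t}. norm (W w s) \<le> C"
      by (auto dest!: compact_imp_bounded simp: bounded_iff)
    moreover obtain R :: nat where "C \<le> real R" using real_arch_simple by blast
    ultimately have "w \<in> paths_bounded M W t (real R)"
      using w unfolding paths_bounded_def by force
    then show False using w by blast
  qed
  moreover have "(\<lambda>R. measure M (space M - paths_bounded M W t (real R)))
      \<longlonglongrightarrow> measure M (\<Inter>R. space M - paths_bounded M W t (real R))"
  proof (rule finite_Lim_measure_decseq)
    show "range (\<lambda>R. space M - paths_bounded M W t (real R)) \<subseteq> sets M"
      using sets_paths_bounded[OF assms(2,3)] by auto
    show "decseq (\<lambda>R. space M - paths_bounded M W t (real R))"
      unfolding decseq_def paths_bounded_def by force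
  qed
  ultimately show ?thesis by (metis measure_empty)
qed

lemma (in prob_space) variance_enn2real_le:
  fixes X :: "'a \<Rightarrow> ennreal"
  assumes [measurable]: "X \<in> borel_measurable M"
    and first: "(\<integral>\<^sup>+x. X x \<partial>M) = ennreal m" and second: "(\<integral>\<^sup>+x. X x * X x \<partial>M) \<le> ennreal q"
    and "0 \<le> m" and "0 \<le> q"
  shows "(\<integral>x. enn2real (X x) \<partial>M) = m"
    and "(\<integral>x. (enn2real (X x) - m)\<^sup>2 \<partial>M) \<le> q - m\<^sup>2"
proof -
  define Y where "Y x = enn2real (X x)" for x
  have [measurable]: "Y \<in> borel_measurable M" unfolding Y_def by measurable
  have "AE x in M. X x \<noteq> \<infinity>"
    using first by (intro nn_integral_PInf_AE) auto
  then have XY: "AE x in M. X x = ennreal (Y x)"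
    by eventually_elim (auto simp: Y_def less_top)
  have nn1: "(\<integral>\<^sup>+x. Y x \<partial>M) = ennreal m"
    using XY first by (simp add: nn_integral_cong_AE)
  have "(\<integral>\<^sup>+x. (Y x)\<^sup>2 \<partial>M) = (\<integral>\<^sup>+x. X x * X x \<partial>M)"
    using XY by (intro nn_integral_cong_AE) (auto simp: Y_def power2_eq_square ennreal_mult)
  then have nn2: "(\<integral>\<^sup>+x. (Y x)\<^sup>2 \<partial>M) \<le> ennreal q"
    using second by simp
  have int1: "integrable M Y"
    using nn1 by (intro integrableI_nonneg) (auto simp: Y_def)
  have int2: "integrable M (\<lambda>x. (Y x)\<^sup>2)"
    using nn2 by (intro integrableI_nonneg) (auto simp: Y_def top.not_eq_extremum intro: le_less_trans)
  have mean: "(\<integral>x. Y x \<partial>M) = m"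
    using nn1 \<open>0 \<le> m\<close> by (subst integral_eq_nn_integral) (auto simp: Y_def)
  have "(\<integral>x. (Y x)\<^sup>2 \<partial>M) \<le> q"
    using nn2 \<open>0 \<le> q\<close> by (subst integral_eq_nn_integral) (auto intro: enn2real_leI)
  moreover have "(\<integral>x. (Y x - m)\<^sup>2 \<partial>M) = (\<integral>x. (Y x)\<^sup>2 \<partial>M) - 2 * m * (\<integral>x. Y x \<partial>M) + m\<^sup>2"
    using int1 int2 by (simp add: power2_diff prob_space)
  ultimately show "(\<integral>x. (enn2real (X x) - m)\<^sup>2 \<partial>M) \<le> q - m\<^sup>2"
    using mean by (simp add: Y_def power2_eq_square)
  show "(\<integral>x. enn2real (X x) \<partial>M) = m"
    using mean by (simp add: Y_def)
qed

lemma LIMSEQ_zero_if_bounded_by_vanishing: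
  fixes V b :: "nat \<Rightarrow> real" and a :: "nat \<Rightarrow> nat \<Rightarrow> real"
  assumes "\<And>n. 0 \<le> V n" and bound: "\<And>R n. V n \<le> a R n + b R"
    and a: "\<And>R. a R \<longlonglongrightarrow> 0" and b: "b \<longlonglongrightarrow> 0"
  shows "V \<longlonglongrightarrow> 0"
proof (rule LIMSEQ_I)
  fix e :: real assume "0 < e"
  then obtain R where "\<forall>n\<ge>R. norm (b n - 0) < e / 2"
    using LIMSEQ_D[OF b, of "e / 2"] by auto
  then have R: "b R < e / 2" by auto
  obtain N where N: "\<forall>n\<ge>N. norm (a R n - 0) < e / 2"
    using LIMSEQ_D[OF a, of "e / 2"] \<open>0 < e\<close> by auto
  have "norm (V n - 0) < e" if "N \<le> n" for n
  proof -
    have "a R n < e / 2" using N that by auto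
    then have "V n < e" using bound[of n R] R by linarith
    then show ?thesis using assms(1)[of n] by simp
  qed
  then show "\<exists>N. \<forall>n\<ge>N. norm (V n - 0) < e" by blast
qed

locale partition_function_setting =
  fixes P :: "'e measure" and B :: "(real \<times> 'd::euclidean_space \<Rightarrow> real) \<Rightarrow> 'e \<Rightarrow> real"
    and M :: "'w measure" and W :: "'w \<Rightarrow> real \<Rightarrow> 'd"
    and \<phi> :: "'d \<Rightarrow> real" and t \<beta> :: real and H :: "'e \<Rightarrow> 'd \<Rightarrow> 'w \<Rightarrow> real"
    and \<alpha> :: "'d measure"
  assumes white_noise: "white_noise P B"
    and mollifier: "mollifier \<phi>"
    and prob_space_M: "prob_space M"
    and W_measurable [measurable]: "\<And>s. (\<lambda>w. W w s) \<in> borel_measurable M"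
    and W_continuous: "\<And>w. continuous_on {0..} (W w)"
    and t_nonneg: "0 \<le> t"
    and H_version: "H_version P B M W \<phi> t H"
    and subprob: "subprob_on \<alpha>"
begin

interpretation P: prob_space P
  using white_noise by (rule white_noise_prob_space)

interpretation M: prob_space M
  by (rule prob_space_M)

interpretation \<alpha>: subprob_space \<alpha>
  using subprob unfolding subprob_on_def by (elim conjE)

lemma sets_\<alpha>: "sets \<alpha> = sets borel"
  using subprob unfolding subprob_on_def by (elim conjE)

abbreviation S :: "('d \<times> 'w) measure" where
  "S \<equiv> \<alpha> \<Otimes>\<^sub>M M"

interpretation S: finite_measure S
  by (rule finite_measure_pair_measure) unfold_locales

interpretation PS: pair_sigma_finite P S
  by unfold_locales

interpretation \<alpha>M: pair_sigma_finite \<alpha> M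
  by unfold_locales

definition K :: real where
  "K = t * (\<integral>y. (\<phi> y)\<^sup>2 \<partial>lborel)"

definition trajectory :: "'d \<times> 'w \<Rightarrow> real \<Rightarrow> 'd" where
  "trajectory u s = fst u + W (snd u) s"

lemma square_int_integrand: "square_int (H_integrand \<phi> t (trajectory u))"
  and integral_integrand_square: "(\<integral>x. (H_integrand \<phi> t (trajectory u) x)\<^sup>2 \<partial>lborel) = K"
proof -
  have "continuous_on {0..} (trajectory u)"
    unfolding trajectory_def by (intro continuous_intros W_continuous)
  then show "square_int (H_integrand \<phi> t (trajectory u))"
    and "(\<integral>x. (H_integrand \<phi> t (trajectory u) x)\<^sup>2 \<partial>lborel) = K"
    using square_int_H_integrand[OF mollifier _ t_nonneg] integral_H_integrand_square[OF mollifier _ t_nonneg]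
    by (simp_all add: K_def)
qed

definition weight :: "'e \<times> 'd \<times> 'w \<Rightarrow> real" where
  "weight = (\<lambda>(\<omega>, z, w). exp (\<beta> * H \<omega> z w))"

lemma weight_nonneg: "0 \<le> weight x"
  by (simp add: weight_def split_beta)

lemma borel_measurable_weight [measurable]: "weight \<in> borel_measurable (P \<Otimes>\<^sub>M S)"
proof -
  have "(\<lambda>(\<omega>, z, w). H \<omega> z w) \<in> borel_measurable (P \<Otimes>\<^sub>M (borel \<Otimes>\<^sub>M M))"
    using H_version unfolding H_version_def by (elim conjE)
  moreover have "sets (P \<Otimes>\<^sub>M S) = sets (P \<Otimes>\<^sub>M (borel \<Otimes>\<^sub>M M))"
    by (intro sets_pair_measure_cong refl sets_\<alpha>)
  ultimately have "(\<lambda>(\<omega>, z, w). H \<omega> z w) \<in> borel_measurable (P \<Otimes>\<^sub>M S)"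
    by (simp cong: measurable_cong_sets)
  moreover have "(\<lambda>x. exp (\<beta> * x)) \<in> borel_measurable borel"
    by (intro borel_measurable_continuous_onI continuous_intros)
  ultimately have "(\<lambda>x. exp (\<beta> * x)) \<circ> (\<lambda>(\<omega>, z, w). H \<omega> z w) \<in> borel_measurable (P \<Otimes>\<^sub>M S)"
    by (rule measurable_comp)
  moreover have "(\<lambda>x. exp (\<beta> * x)) \<circ> (\<lambda>(\<omega>, z, w). H \<omega> z w) = weight"
    by (simp add: weight_def fun_eq_iff split_beta)
  ultimately show ?thesis by simp
qed

lemma weight_eq_white_noise: "AE \<omega> in P. weight (\<omega>, u) = exp (\<beta> * B (H_integrand \<phi> t (trajectory u)) \<omega>)"
proof -
  have "AE \<omega> in P. H \<omega> (fst u) (snd u) = B (H_integrand \<phi> t (trajectory u)) \<omega>"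
    using H_version unfolding H_version_def trajectory_def by (elim conjE) blast
  then show ?thesis by eventually_elim (simp add: weight_def split_beta)
qed

lemma nn_integral_weight: "(\<integral>\<^sup>+\<omega>. weight (\<omega>, u) \<partial>P) = exp (\<beta>\<^sup>2 * K / 2)"
proof -
  have "(\<integral>\<^sup>+\<omega>. weight (\<omega>, u) \<partial>P) = (\<integral>\<^sup>+\<omega>. exp (\<beta> * B (H_integrand \<phi> t (trajectory u)) \<omega>) \<partial>P)"
    using weight_eq_white_noise[of u] by (intro nn_integral_cong_AE) (auto elim: eventually_mono)
  then show ?thesis
    using white_noise_nn_integral_exp[OF white_noise square_int_integrand]
    by (simp add: integral_integrand_square)
qed

lemma nn_integral_weight_mult:
  "(\<integral>\<^sup>+\<omega>. weight (\<omega>, u) * weight (\<omega>, u') \<partial>P)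
    = exp (\<beta>\<^sup>2 * (\<integral>x. (H_integrand \<phi> t (trajectory u) x + H_integrand \<phi> t (trajectory u') x)\<^sup>2 \<partial>lborel) / 2)"
proof -
  have "AE \<omega> in P. weight (\<omega>, u) * weight (\<omega>, u')
      = exp (\<beta> * B (H_integrand \<phi> t (trajectory u)) \<omega>) * exp (\<beta> * B (H_integrand \<phi> t (trajectory u')) \<omega>)"
    using weight_eq_white_noise[of u] weight_eq_white_noise[of u'] by eventually_elim simp
  then have "(\<integral>\<^sup>+\<omega>. weight (\<omega>, u) * weight (\<omega>, u') \<partial>P)
      = (\<integral>\<^sup>+\<omega>. exp (\<beta> * B (H_integrand \<phi> t (trajectory u)) \<omega>)
                * exp (\<beta> * B (H_integrand \<phi> t (trajectory u')) \<omega>) \<partial>P)"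
    by (intro nn_integral_cong_AE) (auto elim: eventually_mono)
  then show ?thesis
    using white_noise_nn_integral_exp_mult[OF white_noise square_int_integrand square_int_integrand]
    by simp
qed

text \<open>\<open>F_t\<close> computed with nonnegative integrals, so that Tonelli applies; the two agree
  almost surely.\<close>
definition \<Phi> :: "'e \<Rightarrow> ennreal" where
  "\<Phi> \<omega> = (\<integral>\<^sup>+u. weight (\<omega>, u) \<partial>S)"

lemma borel_measurable_\<Phi> [measurable]: "\<Phi> \<in> borel_measurable P"
  unfolding \<Phi>_def by measurable

lemma nn_integral_\<Phi>: "(\<integral>\<^sup>+\<omega>. \<Phi> \<omega> \<partial>P) = exp (\<beta>\<^sup>2 * K / 2) * emeasure S (space S)"
proof -
  have "(\<integral>\<^sup>+\<omega>. \<Phi> \<omega> \<partial>P) = (\<integral>\<^sup>+u. \<integral>\<^sup>+\<omega>. weight (\<omega>, u) \<partial>P \<partial>S)"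
    unfolding \<Phi>_def by (rule PS.Fubini[symmetric]) measurable
  then show ?thesis by (simp add: nn_integral_weight)
qed

lemma nn_integral_\<Phi>_square:
  "(\<integral>\<^sup>+\<omega>. \<Phi> \<omega> * \<Phi> \<omega> \<partial>P) = (\<integral>\<^sup>+u. \<integral>\<^sup>+u'. \<integral>\<^sup>+\<omega>. weight (\<omega>, u) * weight (\<omega>, u') \<partial>P \<partial>S \<partial>S)"
proof -
  have "\<Phi> \<omega> * \<Phi> \<omega> = (\<integral>\<^sup>+u. \<integral>\<^sup>+u'. weight (\<omega>, u) * weight (\<omega>, u') \<partial>S \<partial>S)" if "\<omega> \<in> space P" for \<omega>
  proof -
    have [measurable]: "(\<lambda>u. weight (\<omega>, u)) \<in> borel_measurable S" using that by measurable
    have "\<Phi> \<omega> * \<Phi> \<omega> = (\<integral>\<^sup>+u. weight (\<omega>, u) * \<Phi> \<omega> \<partial>S)"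
      unfolding \<Phi>_def[of \<omega>] by (rule nn_integral_multc[symmetric]) measurable
    also have "\<dots> = (\<integral>\<^sup>+u. \<integral>\<^sup>+u'. ennreal (weight (\<omega>, u)) * weight (\<omega>, u') \<partial>S \<partial>S)"
      unfolding \<Phi>_def by (intro nn_integral_cong nn_integral_cmult[symmetric]) measurable
    finally show ?thesis by (simp add: ennreal_mult weight_nonneg)
  qed
  then have "(\<integral>\<^sup>+\<omega>. \<Phi> \<omega> * \<Phi> \<omega> \<partial>P)
      = (\<integral>\<^sup>+\<omega>. \<integral>\<^sup>+u. \<integral>\<^sup>+u'. weight (\<omega>, u) * weight (\<omega>, u') \<partial>S \<partial>S \<partial>P)"
    by (rule nn_integral_cong)
  also have "\<dots> = (\<integral>\<^sup>+u. \<integral>\<^sup>+\<omega>. \<integral>\<^sup>+u'. weight (\<omega>, u) * weight (\<omega>, u') \<partial>S \<partial>P \<partial>S)"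
  proof -
    have "(\<lambda>x. \<integral>\<^sup>+u'. weight (fst x, snd x) * weight (fst x, u') \<partial>S) \<in> borel_measurable (P \<Otimes>\<^sub>M S)"
      by measurable
    from PS.Fubini[OF this] show ?thesis by simp
  qed
  also have "\<dots> = (\<integral>\<^sup>+u. \<integral>\<^sup>+u'. \<integral>\<^sup>+\<omega>. weight (\<omega>, u) * weight (\<omega>, u') \<partial>P \<partial>S \<partial>S)"
  proof (rule nn_integral_cong)
    fix u assume "u \<in> space S"
    then have "(\<lambda>x. ennreal (weight (fst x, u) * weight x)) \<in> borel_measurable (P \<Otimes>\<^sub>M S)"
      by measurable
    from PS.Fubini[OF this]
    show "(\<integral>\<^sup>+\<omega>. \<integral>\<^sup>+u'. weight (\<omega>, u) * weight (\<omega>, u') \<partial>S \<partial>P) = (\<integral>\<^sup>+u'. \<integral>\<^sup>+\<omega>. weight (\<omega>, u) * weight (\<omega>, u') \<partial>P \<partial>S)"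
      by simp
  qed
  finally show ?thesis .
qed

lemma trajectories_far_apart:
  assumes "1 + 2 * R \<le> dist (fst u) (fst u')"
    and "snd u \<in> paths_bounded M W t R" and "snd u' \<in> paths_bounded M W t R" and "s \<in> {0..t}"
  shows "1 \<le> dist (trajectory u s) (trajectory u' s)"
proof -
  have "norm (W (snd u) s) \<le> R" and "norm (W (snd u') s) \<le> R"
    using assms(2-4) unfolding paths_bounded_def by auto
  moreover have "fst u - fst u' = (trajectory u s - trajectory u' s) - (W (snd u) s - W (snd u') s)"
    by (simp add: trajectory_def algebra_simps)
  then have "norm (fst u - fst u') \<le> norm (trajectory u s - trajectory u' s) + norm (W (snd u) s - W (snd u') s)"
    by (simp only: norm_triangle_ineq4)
  moreover have "norm (W (snd u) s - W (snd u') s) \<le> norm (W (snd u) s) + norm (W (snd u') s)"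
    by (rule norm_triangle_ineq4)
  ultimately show ?thesis using assms(1) unfolding dist_norm by linarith
qed

lemma nn_integral_weight_mult_le:
  fixes R :: real
  assumes "snd u \<in> space M" and "snd u' \<in> space M"
  defines "U \<equiv> space M - paths_bounded M W t R"
  shows "(\<integral>\<^sup>+\<omega>. weight (\<omega>, u) * weight (\<omega>, u') \<partial>P)
    \<le> exp (\<beta>\<^sup>2 * K) + exp (2 * \<beta>\<^sup>2 * K)
         * (indicator (ball (fst u) (1 + 2 * R)) (fst u') + indicator U (snd u) + indicator U (snd u'))"
proof -
  let ?f = "H_integrand \<phi> t (trajectory u)" and ?f' = "H_integrand \<phi> t (trajectory u')"
  let ?bad = "indicator (ball (fst u) (1 + 2 * R)) (fst u') + indicator U (snd u) + indicator U (snd u') :: real"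
  have "0 \<le> ?bad" by simp
  show ?thesis
  proof (cases "1 + 2 * R \<le> dist (fst u) (fst u')
      \<and> snd u \<in> paths_bounded M W t R \<and> snd u' \<in> paths_bounded M W t R")
    case True
    then have "?f x * ?f' x = 0" for x
      using trajectories_far_apart[of R u u'] by (intro H_integrand_mult_eq_0[OF mollifier]) auto
    then have "(\<integral>x. (?f x + ?f' x)\<^sup>2 \<partial>lborel) = 2 * K"
      using integral_square_add_eq[OF square_int_integrand square_int_integrand]
      by (simp add: integral_integrand_square)
    then show ?thesis
      unfolding nn_integral_weight_mult using \<open>0 \<le> ?bad\<close> by (intro ennreal_leI) simp
  next
    case False
    then have "1 \<le> ?bad" using assms(1,2) by (auto simp: U_def indicator_def)
    have "(\<integral>x. (?f x + ?f' x)\<^sup>2 \<partial>lborel) \<le> 4 * K"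
      using integral_square_add_le[OF square_int_integrand square_int_integrand, of u u']
      by (simp add: integral_integrand_square)
    then have "\<beta>\<^sup>2 * (\<integral>x. (?f x + ?f' x)\<^sup>2 \<partial>lborel) \<le> \<beta>\<^sup>2 * (4 * K)"
      by (rule mult_left_mono) simp
    then have "exp (\<beta>\<^sup>2 * (\<integral>x. (?f x + ?f' x)\<^sup>2 \<partial>lborel) / 2) \<le> exp (2 * \<beta>\<^sup>2 * K) * 1"
      by simp
    also have "\<dots> \<le> exp (2 * \<beta>\<^sup>2 * K) * ?bad"
      using \<open>1 \<le> ?bad\<close> by (intro mult_left_mono) auto
    finally show ?thesis
      unfolding nn_integral_weight_mult by (intro ennreal_leI) (simp add: add_increasing)
  qed
qed

lemma ball_in_sets_\<alpha> [measurable]: "ball z r \<in> sets \<alpha>"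
  by (simp add: sets_\<alpha>)

lemma nn_integral_indicator_ball_le:
  "(\<integral>\<^sup>+u. indicator (ball z r) (fst u) \<partial>S) \<le> (SUP x. measure \<alpha> (ball x r))"
proof -
  have "(\<integral>\<^sup>+u. indicator (ball z r) (fst u) \<partial>S) = (\<integral>\<^sup>+z'. \<integral>\<^sup>+w. indicator (ball z r) z' \<partial>M \<partial>\<alpha>)"
    using M.nn_integral_fst[of "\<lambda>u. indicator (ball z r) (fst u)" \<alpha>] by simp
  also have "\<dots> = emeasure \<alpha> (ball z r)"
    by (simp add: M.emeasure_space_1)
  also have "\<dots> = measure \<alpha> (ball z r)"
    by (rule \<alpha>.emeasure_eq_measure)
  also have "\<dots> \<le> (SUP x. measure \<alpha> (ball x r))"
    using \<alpha>.subprob_measure_le_1 by (intro ennreal_leI cSUP_upper bdd_aboveI[of _ 1]) auto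
  finally show ?thesis .
qed

lemma nn_integral_indicator_snd_le:
  assumes "A \<in> sets M"
  shows "(\<integral>\<^sup>+u. indicator A (snd u) \<partial>S) \<le> measure M A"
proof -
  have "(\<integral>\<^sup>+u. indicator A (snd u) \<partial>S) = (\<integral>\<^sup>+u. indicator (space \<alpha> \<times> A) u \<partial>S)"
    by (intro nn_integral_cong) (auto simp: space_pair_measure indicator_def)
  also have "\<dots> = emeasure \<alpha> (space \<alpha>) * emeasure M A"
    using assms by (simp add: M.emeasure_pair_measure_Times)
  also have "\<dots> \<le> 1 * emeasure M A"
    by (intro mult_right_mono \<alpha>.emeasure_space_le_1) simp
  finally show ?thesis by (simp add: M.emeasure_eq_measure)
qed

lemma SUP_measure_ball_nonneg: "0 \<le> (SUP x. measure \<alpha> (ball x r))"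
proof -
  have "measure \<alpha> (ball 0 r) \<le> (SUP x. measure \<alpha> (ball x r))"
    using \<alpha>.subprob_measure_le_1 by (intro cSUP_upper bdd_aboveI[of _ 1]) auto
  then show ?thesis by (rule order_trans[OF measure_nonneg])
qed

lemma emeasure_space_S_le_1: "emeasure S (space S) \<le> 1"
  using \<alpha>.emeasure_space_le_1
  by (simp add: space_pair_measure M.emeasure_pair_measure_Times M.emeasure_space_1)

lemma nn_integral_mixed_moment_le:
  fixes R :: real
  defines "U \<equiv> space M - paths_bounded M W t R"
  assumes u: "u \<in> space S"
  shows "(\<integral>\<^sup>+u'. \<integral>\<^sup>+\<omega>. weight (\<omega>, u) * weight (\<omega>, u') \<partial>P \<partial>S)
    \<le> ennreal (exp (\<beta>\<^sup>2 * K)) * emeasure S (space S) + ennreal (exp (2 * \<beta>\<^sup>2 * K))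
         * (ennreal (SUP x. measure \<alpha> (ball x (1 + 2 * R))) + ennreal (measure M U) + indicator U (snd u))"
proof -
  define a E where "a = ennreal (exp (\<beta>\<^sup>2 * K))" and "E = ennreal (exp (2 * \<beta>\<^sup>2 * K))"
  have [measurable]: "U \<in> sets M"
    unfolding U_def using sets_paths_bounded[OF W_measurable W_continuous] by auto
  have ennreal_expand: "ennreal (c + d * (x + y + z))
      = ennreal c + ennreal d * ennreal x + ennreal d * ennreal y + ennreal d * ennreal z"
    if "0 \<le> c" "0 \<le> d" "0 \<le> x" "0 \<le> y" "0 \<le> z" for c d x y z :: real
    using that by (simp add: ennreal_mult' distrib_left add.assoc)
  have "(\<integral>\<^sup>+\<omega>. weight (\<omega>, u) * weight (\<omega>, u') \<partial>P)
      \<le> a + E * indicator (ball (fst u) (1 + 2 * R)) (fst u') + E * indicator U (snd u) + E * indicator U (snd u')"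
    if "u' \<in> space S" for u'
  proof -
    have "snd u \<in> space M" "snd u' \<in> space M"
      using u that by (auto simp: space_pair_measure)
    then have "(\<integral>\<^sup>+\<omega>. weight (\<omega>, u) * weight (\<omega>, u') \<partial>P) \<le> ennreal (exp (\<beta>\<^sup>2 * K) + exp (2 * \<beta>\<^sup>2 * K)
        * (indicator (ball (fst u) (1 + 2 * R)) (fst u') + indicator U (snd u) + indicator U (snd u')))"
      unfolding U_def by (rule nn_integral_weight_mult_le)
    then show ?thesis
      by (subst (asm) ennreal_expand) (simp_all add: a_def E_def ennreal_indicator)
  qed
  then have "(\<integral>\<^sup>+u'. \<integral>\<^sup>+\<omega>. weight (\<omega>, u) * weight (\<omega>, u') \<partial>P \<partial>S)
      \<le> (\<integral>\<^sup>+u'. a + E * indicator (ball (fst u) (1 + 2 * R)) (fst u') + E * indicator U (snd u)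
                  + E * indicator U (snd u') \<partial>S)"
    by (rule nn_integral_mono)
  also have "\<dots> = a * emeasure S (space S) + E * (\<integral>\<^sup>+u'. indicator (ball (fst u) (1 + 2 * R)) (fst u') \<partial>S)
      + E * indicator U (snd u) * emeasure S (space S) + E * (\<integral>\<^sup>+u'. indicator U (snd u') \<partial>S)"
    by (simp add: nn_integral_add nn_integral_cmult)
  also have "\<dots> \<le> a * emeasure S (space S) + E * (SUP x. measure \<alpha> (ball x (1 + 2 * R)))
      + E * indicator U (snd u) * 1 + E * measure M U"
    using nn_integral_indicator_ball_le nn_integral_indicator_snd_le emeasure_space_S_le_1
    by (intro add_mono mult_left_mono order_refl) auto
  finally show ?thesis
    by (simp add: a_def E_def distrib_left add_ac)
qed

lemma nn_integral_\<Phi>_square_le: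
  fixes R :: real
  defines "U \<equiv> space M - paths_bounded M W t R"
  shows "(\<integral>\<^sup>+\<omega>. \<Phi> \<omega> * \<Phi> \<omega> \<partial>P)
    \<le> exp (\<beta>\<^sup>2 * K) * emeasure S (space S) * emeasure S (space S)
       + exp (2 * \<beta>\<^sup>2 * K) * ((SUP x. measure \<alpha> (ball x (1 + 2 * R))) + 2 * measure M U)"
proof -
  define a E s p where "a = ennreal (exp (\<beta>\<^sup>2 * K))" and "E = ennreal (exp (2 * \<beta>\<^sup>2 * K))"
    and "s = (SUP x. measure \<alpha> (ball x (1 + 2 * R)))" and "p = measure M U"
  define \<sigma> where "\<sigma> = emeasure S (space S)"
  have [measurable]: "U \<in> sets M"
    unfolding U_def using sets_paths_bounded[OF W_measurable W_continuous] by auto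
  have "(\<integral>\<^sup>+\<omega>. \<Phi> \<omega> * \<Phi> \<omega> \<partial>P) \<le> (\<integral>\<^sup>+u. a * \<sigma> + E * (ennreal s + ennreal p + indicator U (snd u)) \<partial>S)"
    unfolding nn_integral_\<Phi>_square a_def E_def s_def p_def \<sigma>_def U_def
    by (intro nn_integral_mono nn_integral_mixed_moment_le)
  also have "\<dots> = a * \<sigma> * \<sigma> + (E * s + E * p) * \<sigma> + E * (\<integral>\<^sup>+u. indicator U (snd u) \<partial>S)"
    by (simp add: nn_integral_add nn_integral_cmult \<sigma>_def distrib_left distrib_right)
  also have "\<dots> \<le> a * \<sigma> * \<sigma> + (E * s + E * p) * 1 + E * p"
    using nn_integral_indicator_snd_le emeasure_space_S_le_1
    by (intro add_mono mult_left_mono order_refl) (auto simp: p_def \<sigma>_def)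
  also have "\<dots> = a * \<sigma> * \<sigma> + E * (s + 2 * p)"
  proof -
    have "0 \<le> s" and "0 \<le> p"
      using SUP_measure_ball_nonneg by (simp_all add: s_def p_def)
    then have "ennreal (s + 2 * p) = ennreal s + 2 * ennreal p"
      by (simp add: ennreal_mult')
    moreover have "2 * ennreal p = ennreal p + ennreal p"
      by (rule mult_2)
    ultimately show ?thesis
      by (simp only: distrib_left mult_1_right add.assoc)
  qed
  finally show ?thesis
    by (simp add: a_def E_def s_def p_def \<sigma>_def ennreal_mult')
qed

lemma F_t_eq: "F_t M H \<beta> \<alpha> \<omega> = (\<integral>z. \<integral>w. weight (\<omega>, z, w) \<partial>M \<partial>\<alpha>)"
  by (simp add: F_t_def weight_def)

lemma borel_measurable_F_t [measurable]: "F_t M H \<beta> \<alpha> \<in> borel_measurable P"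
  unfolding F_t_eq by measurable

lemma F_t_eq_enn2real_\<Phi>:
  assumes "\<omega> \<in> space P" and "\<Phi> \<omega> \<noteq> \<infinity>"
  shows "F_t M H \<beta> \<alpha> \<omega> = enn2real (\<Phi> \<omega>)"
proof -
  have [measurable]: "(\<lambda>u. weight (\<omega>, u)) \<in> borel_measurable S"
    using assms(1) by measurable
  have int: "integrable S (\<lambda>u. weight (\<omega>, u))"
    using assms(2) by (intro integrableI_nonneg) (auto simp: \<Phi>_def weight_nonneg top.not_eq_extremum)
  have "F_t M H \<beta> \<alpha> \<omega> = (\<integral>u. weight (\<omega>, u) \<partial>S)"
    unfolding F_t_eq using \<alpha>M.integral_fst'[OF int] by simp
  also have "\<dots> = enn2real (\<Phi> \<omega>)"
    by (simp add: \<Phi>_def integral_eq_nn_integral weight_nonneg)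
  finally show ?thesis .
qed

lemma variance_F_t_le:
  "(\<integral>\<omega>. (F_t M H \<beta> \<alpha> \<omega> - (\<integral>\<omega>'. F_t M H \<beta> \<alpha> \<omega>' \<partial>P))\<^sup>2 \<partial>P)
    \<le> exp (2 * \<beta>\<^sup>2 * K) * ((SUP x. measure \<alpha> (ball x (1 + 2 * R)))
         + 2 * measure M (space M - paths_bounded M W t R))"
  (is "_ \<le> exp (2 * \<beta>\<^sup>2 * K) * ?v")
proof -
  define \<sigma> where "\<sigma> = measure S (space S)"
  define m where "m = exp (\<beta>\<^sup>2 * K / 2) * \<sigma>"
  define q where "q = exp (\<beta>\<^sup>2 * K) * \<sigma> * \<sigma> + exp (2 * \<beta>\<^sup>2 * K) * ?v"
  have "0 \<le> ?v"
    using SUP_measure_ball_nonneg by (intro add_nonneg_nonneg) auto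
  then have "0 \<le> m" and "0 \<le> q"
    by (simp_all add: m_def q_def \<sigma>_def)
  have first: "(\<integral>\<^sup>+\<omega>. \<Phi> \<omega> \<partial>P) = ennreal m"
    by (simp add: nn_integral_\<Phi> m_def \<sigma>_def S.emeasure_eq_measure ennreal_mult')
  have second: "(\<integral>\<^sup>+\<omega>. \<Phi> \<omega> * \<Phi> \<omega> \<partial>P) \<le> ennreal q"
    using nn_integral_\<Phi>_square_le[of R] \<open>0 \<le> ?v\<close>
    by (simp add: q_def \<sigma>_def S.emeasure_eq_measure ennreal_mult')
  note moments = P.variance_enn2real_le[OF borel_measurable_\<Phi> first second \<open>0 \<le> m\<close> \<open>0 \<le> q\<close>]
  have "AE \<omega> in P. \<Phi> \<omega> \<noteq> \<infinity>"
    using first by (intro nn_integral_PInf_AE) auto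
  then have F_t_AE: "AE \<omega> in P. F_t M H \<beta> \<alpha> \<omega> = enn2real (\<Phi> \<omega>)"
    using AE_space by eventually_elim (simp add: F_t_eq_enn2real_\<Phi>)
  then have "(\<integral>\<omega>. F_t M H \<beta> \<alpha> \<omega> \<partial>P) = (\<integral>\<omega>. enn2real (\<Phi> \<omega>) \<partial>P)"
    by (intro integral_cong_AE) auto
  then have "(\<integral>\<omega>. F_t M H \<beta> \<alpha> \<omega> \<partial>P) = m"
    using moments(1) by simp
  then have "(\<integral>\<omega>. (F_t M H \<beta> \<alpha> \<omega> - (\<integral>\<omega>'. F_t M H \<beta> \<alpha> \<omega>' \<partial>P))\<^sup>2 \<partial>P)
      = (\<integral>\<omega>. (enn2real (\<Phi> \<omega>) - m)\<^sup>2 \<partial>P)"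
    using F_t_AE by (intro integral_cong_AE) auto
  also have "\<dots> \<le> q - m\<^sup>2"
    by (rule moments(2))
  also have "\<dots> = exp (2 * \<beta>\<^sup>2 * K) * ?v"
    by (simp add: q_def m_def power2_eq_square exp_add[symmetric])
  finally show ?thesis .
qed

end

lemma brownian_motion_paths:
  assumes "brownian_motion M W"
  shows "prob_space M" and "\<And>s. (\<lambda>w. W w s) \<in> borel_measurable M"
    and "\<And>w. continuous_on {0..} (W w)"
  using assms unfolding brownian_motion_def by blast+

theorem proposition3p6:
  fixes t \<beta> :: real
    and \<phi> :: "'d::euclidean_space \<Rightarrow> real"
    and M :: "'w measure" and W :: "'w \<Rightarrow> real \<Rightarrow> 'd"
    and P :: "'e measure" and B :: "(real \<times> 'd \<Rightarrow> real) \<Rightarrow> 'e \<Rightarrow> real"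
    and H :: "'e \<Rightarrow> 'd \<Rightarrow> 'w \<Rightarrow> real"
    and \<beta>s :: "nat \<Rightarrow> 'd measure"
  assumes "t > 0" and "\<beta> > 0"
    and "mollifier \<phi>"
    and "brownian_motion M W"
    and "white_noise P B"
    and "H_version P B M W \<phi> t H"
    and "\<And>n. subprob_on (\<beta>s n)"
    and "totally_disintegrates \<beta>s"
  shows "(\<lambda>n. \<integral>\<omega>. (F_t M H \<beta> (\<beta>s n) \<omega> - (\<integral>\<omega>'. F_t M H \<beta> (\<beta>s n) \<omega>' \<partial>P))\<^sup>2 \<partial>P)
           \<longlonglongrightarrow> 0"
proof (rule LIMSEQ_zero_if_bounded_by_vanishing)
  show "0 \<le> (\<integral>\<omega>. (F_t M H \<beta> (\<beta>s n) \<omega> - (\<integral>\<omega>'. F_t M H \<beta> (\<beta>s n) \<omega>' \<partial>P))\<^sup>2 \<partial>P)" for n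
    by (intro Bochner_Integration.integral_nonneg zero_le_power2)
  have setting: "partition_function_setting P B M W \<phi> t H (\<beta>s n)" for n
    using assms(5,3) brownian_motion_paths[OF assms(4)] less_imp_le[OF assms(1)] assms(6,7)
    by (rule partition_function_setting.intro)
  define C where "C = exp (2 * \<beta>\<^sup>2 * partition_function_setting.K \<phi> t)"
  show "(\<integral>\<omega>. (F_t M H \<beta> (\<beta>s n) \<omega> - (\<integral>\<omega>'. F_t M H \<beta> (\<beta>s n) \<omega>' \<partial>P))\<^sup>2 \<partial>P)
      \<le> C * (SUP x. measure (\<beta>s n) (ball x (1 + 2 * real R)))
        + C * (2 * measure M (space M - paths_bounded M W t (real R)))" for n R
    using partition_function_setting.variance_F_t_le[OF setting, of \<beta> n "real R"]
    by (simp add: C_def distrib_left)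
  show "(\<lambda>n. C * (SUP x. measure (\<beta>s n) (ball x (1 + 2 * real R)))) \<longlonglongrightarrow> 0" for R
    using assms(8) unfolding totally_disintegrates_def by (auto intro: tendsto_mult_right_zero)
  show "(\<lambda>R. C * (2 * measure M (space M - paths_bounded M W t (real R)))) \<longlonglongrightarrow> 0"
    using measure_paths_unbounded_tendsto_0[OF brownian_motion_paths[OF assms(4)]]
    by (intro tendsto_mult_right_zero)
qed

end
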